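(* Let $N\ge1$, $W,N_0,P_A,P^{max}>0$ and for $i=1,\dots,N$ let $D_i,\zeta_i,h_i,g_i>0$. Consider the problem: minimize $\tau_0+\sum_{i=1}^N\tau_{S_i}$ over $\tau_0,\tau_{S_i},P_{S_i}\ge0$ subject to, for all $i$, $P_{S_i}\tau_{S_i}\le\zeta_iP_Ah_i\tau_0$, $\tau_{S_i}W\log_2\left(1+\frac{P_{S_i}g_i}{WN_0}\right)\ge D_i$, and $P_{S_i}\le P^{max}$. For each $i$ let $\gamma_i=\frac{g_i\zeta_iP_Ah_i}{WN_0}$, $\alpha_i=\mathbb{L}_0\!\left(\frac{\gamma_i-1}{e}\right)+1$ ($\mathbb{L}_0$ the principal Lambert W function), $\dot\tau_{S_i}=\frac{D_i\ln2}{W\alpha_i}$, $\dot\tau_0^i=\frac{D_i\ln2}{W\alpha_i\gamma_i}\left(2^{\alpha_i/\ln2}-1\right)$, $\ddot\tau_{S_i}=\frac{D_i}{W\log_2(1+P^{max}g_i/(WN_0))}$, $\ddot\tau_0^i=\frac{P^{max}\ddot\tau_{S_i}}{\zeta_iP_Ah_i}$, and set $\hat\tau_0^i=\dot\tau_0^i$ if $\zeta_iP_Ah_i\dot\tau_0^i/\dot\tau_{S_i}\le P^{max}$ and $\hat\tau_0^i=\ddot\tau_0^i$ otherwise. Then $\max_{i=1,\dots,N}\hat\tau_0^i$ is a lower bound on the optimal value of $\tau_0$ in this problem.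
   Context: Multiple source wireless powered network: all sources harvest energy from an AP of power $P_A$ during a common time $\tau_0$ (source $i$ harvests $\zeta_iP_Ah_i\tau_0$), then each source $i$ transmits $D_i$ bits in its own slot of length $\tau_{S_i}$ with power $P_{S_i}$ over an AWGN channel of gain $g_i$. $\hat\tau_0^i$ is the optimal energy harvesting time when source $i$ is alone in the network. *)

theory Defs
  imports Complex_Main
begin

text \<open>Principal branch of the Lambert W function (defined on [-1/e, inf)):
  the unique w \<ge> -1 with w * exp w = x.\<close>
definition lambertW0 :: "real \<Rightarrow> real" where
  "lambertW0 x = (THE w. -1 \<le> w \<and> w * exp w = x)"

definition wpn_feasible ::
  "nat \<Rightarrow> real \<Rightarrow> real \<Rightarrow> real \<Rightarrow> real \<Rightarrow> (nat \<Rightarrow> real) \<Rightarrow> (nat \<Rightarrow> real)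
   \<Rightarrow> (nat \<Rightarrow> real) \<Rightarrow> (nat \<Rightarrow> real) \<Rightarrow> real \<Rightarrow> (nat \<Rightarrow> real) \<Rightarrow> (nat \<Rightarrow> real) \<Rightarrow> bool" where
  "wpn_feasible N W N0 PA Pmax D zeta h g tau0 tauS PS \<longleftrightarrow>
     tau0 \<ge> 0 \<and>
     (\<forall>i\<in>{1..N}. tauS i \<ge> 0 \<and> PS i \<ge> 0 \<and>
        PS i * tauS i \<le> zeta i * PA * h i * tau0 \<and>
        tauS i * W * log 2 (1 + PS i * g i / (W * N0)) \<ge> D i \<and>
        PS i \<le> Pmax)"

definition wpn_objective :: "nat \<Rightarrow> real \<Rightarrow> (nat \<Rightarrow> real) \<Rightarrow> real" where
  "wpn_objective N tau0 tauS = tau0 + (\<Sum>i=1..N. tauS i)"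

definition wpn_optimal ::
  "nat \<Rightarrow> real \<Rightarrow> real \<Rightarrow> real \<Rightarrow> real \<Rightarrow> (nat \<Rightarrow> real) \<Rightarrow> (nat \<Rightarrow> real)
   \<Rightarrow> (nat \<Rightarrow> real) \<Rightarrow> (nat \<Rightarrow> real) \<Rightarrow> real \<Rightarrow> (nat \<Rightarrow> real) \<Rightarrow> (nat \<Rightarrow> real) \<Rightarrow> bool" where
  "wpn_optimal N W N0 PA Pmax D zeta h g tau0 tauS PS \<longleftrightarrow>
     wpn_feasible N W N0 PA Pmax D zeta h g tau0 tauS PS \<and>
     (\<forall>t0 tS P. wpn_feasible N W N0 PA Pmax D zeta h g t0 tS P \<longrightarrow>
        wpn_objective N tau0 tauS \<le> wpn_objective N t0 tS)"

definition gamma_i :: "real \<Rightarrow> real \<Rightarrow> real \<Rightarrow> real \<Rightarrow> real \<Rightarrow> real \<Rightarrow> real" where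
  "gamma_i W N0 PA zeta h g = g * zeta * PA * h / (W * N0)"

definition alpha_i :: "real \<Rightarrow> real" where
  "alpha_i \<gamma> = lambertW0 ((\<gamma> - 1) / exp 1) + 1"

definition tau0_hat ::
  "real \<Rightarrow> real \<Rightarrow> real \<Rightarrow> real \<Rightarrow> real \<Rightarrow> real \<Rightarrow> real \<Rightarrow> real \<Rightarrow> real" where
  "tau0_hat W N0 PA Pmax D zeta h g =
     (let \<gamma> = gamma_i W N0 PA zeta h g;
          \<alpha> = alpha_i \<gamma>;
          tSdot = D * ln 2 / (W * \<alpha>);
          t0dot = D * ln 2 / (W * \<alpha> * \<gamma>) * (2 powr (\<alpha> / ln 2) - 1);
          tSddot = D / (W * log 2 (1 + Pmax * g / (W * N0)));
          t0ddot = Pmax * tSddot / (zeta * PA * h)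
      in if zeta * PA * h * t0dot / tSdot \<le> Pmax then t0dot else t0ddot)"

end

theory Submission
  imports Defs
begin

text \<open>Fix a source with SNR gain \<gamma> and write u = ln (1 + P g / (W N0)) for its spectral
  efficiency in nats. Any feasible schedule has \<tau>S u \<ge> K = D ln 2 / W and
  \<gamma> \<tau>0 \<ge> (e^u - 1) \<tau>S, hence \<gamma> (\<tau>0 + \<tau>S) \<ge> K (\<gamma> - 1 + e^u) / u. As a function of u the
  right-hand side has its unique minimum where (u - 1) e^u = \<gamma> - 1, i.e. at u = \<alpha> (this is
  the equation the Lambert W function solves), and it decreases on (0, \<alpha>]; so under the power
  cap it is uniquely minimised at u* = min \<alpha> u_max. The schedule that is tight at u* harvests
  for exactly \<tau>0_hat. If an optimal solution had \<tau>0 < \<tau>0_hat, replacing that source's part by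
  the tight schedule would therefore strictly decrease \<tau>0 + \<tau>S (when u = u* already
  \<tau>0 \<ge> \<tau>0_hat), while the longer harvesting time keeps every other source feasible.\<close>

lemma exp_tangent_less:
  fixes a u :: real
  assumes "u \<noteq> a"
  shows "exp a * (1 + (u - a)) < exp u"
proof -
  have "1 + (u - a) < exp (u - a)"
    using exp_minus_greater[of "a - u"] assms by simp
  then show ?thesis by (simp add: exp_diff field_simps)
qed

lemma diff_one_mult_exp_mono:
  fixes v a :: real
  assumes "0 \<le> v" "v \<le> a"
  shows "(v - 1) * exp v \<le> (a - 1) * exp a"
proof (rule DERIV_nonneg_imp_nondecreasing[OF assms(2)])
  fix x assume "v \<le> x" "x \<le> a"
  show "\<exists>y. DERIV (\<lambda>x. (x - 1) * exp x) x :> y \<and> y \<ge> 0"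
    using \<open>v \<le> x\<close> assms
    by (intro exI[of _ "x * exp x"]) (auto intro!: derivative_eq_intros simp: algebra_simps)
qed

lemma mult_exp_strict_mono:
  fixes w1 w2 :: real
  assumes "-1 \<le> w1" "w1 < w2"
  shows "w1 * exp w1 < w2 * exp w2"
proof (rule DERIV_pos_imp_increasing_open[OF assms(2)])
  fix x assume "w1 < x" "x < w2"
  then have "0 < (1 + x) * exp x" using assms(1) by simp
  then show "\<exists>y. DERIV (\<lambda>x. x * exp x) x :> y \<and> y > 0"
    by (intro exI[of _ "(1 + x) * exp x"]) (auto intro!: derivative_eq_intros simp: algebra_simps)
qed (intro continuous_intros)

lemma lambertW0_unique:
  fixes y :: real
  assumes "-1 / exp 1 \<le> y"
  shows "\<exists>!w. -1 \<le> w \<and> w * exp w = y"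
proof -
  have "\<exists>w. -1 \<le> w \<and> w \<le> max 0 y \<and> w * exp w = y"
  proof (rule IVT')
    show "(-1) * exp (-1) \<le> y" using assms by (simp add: exp_minus field_simps)
    have "max 0 y * 1 \<le> max 0 y * exp (max 0 y)" by (intro mult_left_mono) auto
    then show "y \<le> max 0 y * exp (max 0 y)" using max.cobounded2[of y 0] by linarith
  qed (auto intro!: continuous_intros)
  then obtain w where "-1 \<le> w" "w * exp w = y" by blast
  then show ?thesis
    by (metis linorder_neqE_linordered_idom mult_exp_strict_mono order_less_irrefl)
qed

lemma lambertW0:
  fixes y :: real
  assumes "-1 / exp 1 \<le> y"
  shows "-1 \<le> lambertW0 y" "lambertW0 y * exp (lambertW0 y) = y"
  using theI'[OF lambertW0_unique[OF assms]] unfolding lambertW0_def by auto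

lemma alpha_i:
  fixes \<gamma> :: real
  assumes "0 < \<gamma>"
  shows "0 < alpha_i \<gamma>" "(alpha_i \<gamma> - 1) * exp (alpha_i \<gamma>) = \<gamma> - 1"
proof -
  define w where "w = lambertW0 ((\<gamma> - 1) / exp 1)"
  have y: "-1 / exp 1 < (\<gamma> - 1) / exp 1" using assms by (simp add: field_simps)
  then have w: "-1 \<le> w" "w * exp w = (\<gamma> - 1) / exp 1"
    using lambertW0 unfolding w_def by auto
  moreover have "w \<noteq> -1" using w(2) y by (auto simp: exp_minus field_simps)
  moreover have "alpha_i \<gamma> = w + 1" unfolding alpha_i_def w_def by simp
  ultimately show "0 < alpha_i \<gamma>" "(alpha_i \<gamma> - 1) * exp (alpha_i \<gamma>) = \<gamma> - 1"
    by (auto simp: exp_add field_simps)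
qed

text \<open>For a schedule that is tight at efficiency u, \<gamma> (\<tau>0 + \<tau>S) = K * time_factor \<gamma> u.\<close>
definition time_factor :: "real \<Rightarrow> real \<Rightarrow> real" where
  "time_factor \<gamma> u = (\<gamma> - 1 + exp u) / u"

lemma time_factor_global_min:
  fixes \<gamma> a u :: real
  assumes "0 < a" "(a - 1) * exp a = \<gamma> - 1" "0 < u" "u \<noteq> a"
  shows "time_factor \<gamma> a < time_factor \<gamma> u"
proof -
  have "time_factor \<gamma> a = exp a"
    using assms(1,2) unfolding time_factor_def by (simp add: field_simps)
  moreover have "u * exp a < \<gamma> - 1 + exp u"
    using exp_tangent_less[OF assms(4)] assms(2) by (simp add: algebra_simps)
  ultimately show ?thesis
    using assms(3) unfolding time_factor_def by (simp add: field_simps)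
qed

lemma time_factor_strict_antimono:
  fixes \<gamma> u v :: real
  assumes "0 < u" "u < v" "(v - 1) * exp v \<le> \<gamma> - 1"
  shows "time_factor \<gamma> v < time_factor \<gamma> u"
proof -
  have "u * (\<gamma> - 1 + exp v) \<le> v * (\<gamma> - 1 + exp v * (1 + (u - v)))"
  proof -
    have "0 \<le> (v - u) * (\<gamma> - 1 - (v - 1) * exp v)" using assms by simp
    then show ?thesis by (simp add: algebra_simps)
  qed
  also have "\<dots> < v * (\<gamma> - 1 + exp u)"
    using exp_tangent_less[of u v] assms by simp
  finally show ?thesis using assms unfolding time_factor_def by (simp add: field_simps)
qed

lemma time_factor_capped_min:
  fixes \<gamma> a b u :: real
  assumes "0 < a" "(a - 1) * exp a = \<gamma> - 1" "0 < u" "u \<le> b" "u \<noteq> min a b"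
  shows "time_factor \<gamma> (min a b) < time_factor \<gamma> u"
proof (cases "a \<le> b")
  case True
  then show ?thesis using time_factor_global_min assms by simp
next
  case False
  then have "(b - 1) * exp b \<le> \<gamma> - 1"
    using diff_one_mult_exp_mono[of b a] assms by simp
  then show ?thesis using time_factor_strict_antimono[of u b] False assms by simp
qed

lemma tight_schedule_strictly_better:
  fixes K \<gamma> u v t0 tS :: real
  assumes "0 < K" "0 < \<gamma>" "0 < u" "0 < v"
    and rate: "K \<le> tS * u" and energy: "(exp u - 1) * tS \<le> \<gamma> * t0"
    and minimal: "u \<noteq> v \<Longrightarrow> time_factor \<gamma> v < time_factor \<gamma> u"
    and t0_short: "t0 < K * (exp v - 1) / (v * \<gamma>)"
  shows "K * (exp v - 1) / (v * \<gamma>) + K / v < t0 + tS"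
proof (cases "u = v")
  case True
  have "K / v \<le> tS" using rate \<open>u = v\<close> assms(4) by (simp add: field_simps)
  then have "(exp v - 1) / \<gamma> * (K / v) \<le> (exp v - 1) / \<gamma> * tS"
    using assms(2,4) by (intro mult_left_mono) auto
  then have "K * (exp v - 1) / (v * \<gamma>) \<le> (exp u - 1) * tS / \<gamma>"
    using \<open>u = v\<close> by (simp add: field_simps)
  also have "\<dots> \<le> t0" using energy assms(2) by (simp add: field_simps)
  finally show ?thesis using t0_short by simp
next
  case False
  have "K * (exp v - 1) / (v * \<gamma>) + K / v = K * time_factor \<gamma> v / \<gamma>"
    using assms(2,4) unfolding time_factor_def by (simp add: field_simps)
  also have "\<dots> < K * time_factor \<gamma> u / \<gamma>"
    using minimal[OF False] assms(1,2) by (simp add: divide_strict_right_mono)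
  also have "\<dots> \<le> tS * u * time_factor \<gamma> u / \<gamma>"
  proof -
    have "1 < exp u" using assms(3) by simp
    then have "0 < \<gamma> - 1 + exp u" using assms(2) by linarith
    then have "0 < time_factor \<gamma> u" using assms(3) unfolding time_factor_def by simp
    then show ?thesis using rate assms(2) by (simp add: divide_right_mono)
  qed
  also have "\<dots> = (exp u - 1) * tS / \<gamma> + tS"
    using assms(2,3) unfolding time_factor_def by (simp add: field_simps)
  also have "\<dots> \<le> t0 + tS" using energy assms(2) by (simp add: field_simps)
  finally show ?thesis .
qed

lemma sum_fun_upd:
  fixes f :: "'a \<Rightarrow> 'b::ab_group_add"
  assumes "finite A" "i \<in> A"
  shows "sum (f(i := a)) A = sum f A - f i + a"
proof -
  have "sum (f(i := a)) (A - {i}) = sum f (A - {i})" by (intro sum.cong) auto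
  then show ?thesis using assms by (simp add: sum.remove[of A i])
qed

definition source_feasible ::
  "real \<Rightarrow> real \<Rightarrow> real \<Rightarrow> real \<Rightarrow> real \<Rightarrow> real \<Rightarrow> real \<Rightarrow> real \<Rightarrow> real \<Rightarrow> real \<Rightarrow> real \<Rightarrow> bool" where
  "source_feasible W N0 PA Pmax D zeta h g t0 tS P \<longleftrightarrow>
     tS \<ge> 0 \<and> P \<ge> 0 \<and> P * tS \<le> zeta * PA * h * t0 \<and>
     tS * W * log 2 (1 + P * g / (W * N0)) \<ge> D \<and> P \<le> Pmax"

lemma wpn_feasible_iff:
  "wpn_feasible N W N0 PA Pmax D zeta h g t0 tS P \<longleftrightarrow>
     t0 \<ge> 0 \<and> (\<forall>i\<in>{1..N}.
       source_feasible W N0 PA Pmax (D i) (zeta i) (h i) (g i) t0 (tS i) (P i))"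
  unfolding wpn_feasible_def source_feasible_def by blast

lemma source_feasible_mono:
  assumes "source_feasible W N0 PA Pmax D zeta h g t0 tS P" "t0 \<le> t0'" "0 \<le> zeta * PA * h"
  shows "source_feasible W N0 PA Pmax D zeta h g t0' tS P"
  using assms order.trans[OF _ mult_left_mono[OF assms(2,3)]]
  unfolding source_feasible_def by blast

lemma wpn_feasible_fun_upd:
  assumes "wpn_feasible N W N0 PA Pmax D zeta h g t0 tS P" "t0 \<le> t0'"
    and "\<forall>j\<in>{1..N}. 0 \<le> zeta j * PA * h j"
    and "source_feasible W N0 PA Pmax (D i) (zeta i) (h i) (g i) t0' tS' P'"
  shows "wpn_feasible N W N0 PA Pmax D zeta h g t0' (tS(i := tS')) (P(i := P'))"
  using assms source_feasible_mono[of W N0 PA Pmax "D _" "zeta _" "h _" "g _" t0]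
  unfolding wpn_feasible_iff by auto

locale wpn_source =
  fixes W N0 PA Pmax D zeta h g :: real
  assumes pos: "0 < W" "0 < N0" "0 < PA" "0 < Pmax" "0 < D" "0 < zeta" "0 < h" "0 < g"
begin

abbreviation "\<gamma> \<equiv> gamma_i W N0 PA zeta h g"

definition demand :: real where
  "demand = D * ln 2 / W"

definition efficiency :: "real \<Rightarrow> real" where
  "efficiency P = ln (1 + P * g / (W * N0))"

definition opt_efficiency :: real where
  "opt_efficiency = min (alpha_i \<gamma>) (efficiency Pmax)"

lemma demand_pos: "0 < demand"
  using pos unfolding demand_def by simp

lemma gamma_eq: "\<gamma> = g * (zeta * PA * h) / (W * N0)"
  unfolding gamma_i_def by (simp add: algebra_simps)

lemma gamma_pos: "0 < \<gamma>"
  using pos unfolding gamma_eq by simp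

lemma snr_nonneg: "0 \<le> P \<Longrightarrow> 0 \<le> P * g / (W * N0)"
  using pos by simp

lemma exp_efficiency: "0 \<le> P \<Longrightarrow> exp (efficiency P) = 1 + P * g / (W * N0)"
  using snr_nonneg unfolding efficiency_def by (simp add: add_pos_nonneg)

lemma efficiency_mono:
  assumes "0 \<le> P" "P \<le> P'"
  shows "efficiency P \<le> efficiency P'"
proof -
  have "P * g / (W * N0) \<le> P' * g / (W * N0)"
    using assms pos by (intro divide_right_mono mult_right_mono) auto
  then show ?thesis
    using snr_nonneg[OF assms(1)] unfolding efficiency_def by (simp add: add_pos_nonneg)
qed

lemma efficiency_Pmax_pos: "0 < efficiency Pmax"
proof -
  have "0 < Pmax * g / (W * N0)" using pos by simp
  then show ?thesis unfolding efficiency_def by simp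
qed

lemma opt_efficiency_pos: "0 < opt_efficiency"
  using alpha_i(1)[OF gamma_pos] efficiency_Pmax_pos unfolding opt_efficiency_def by simp

lemma source_feasible_efficiency:
  assumes "source_feasible W N0 PA Pmax D zeta h g t0 tS P"
  shows "demand \<le> tS * efficiency P" "(exp (efficiency P) - 1) * tS \<le> \<gamma> * t0"
    "0 < efficiency P" "efficiency P \<le> efficiency Pmax"
proof -
  have P: "0 \<le> P" "P * tS \<le> zeta * PA * h * t0" "P \<le> Pmax"
    and rate: "D \<le> tS * W * (efficiency P / ln 2)"
    using assms unfolding source_feasible_def efficiency_def log_def by auto
  then show demand: "demand \<le> tS * efficiency P"
    using pos unfolding demand_def by (simp add: field_simps)
  show "(exp (efficiency P) - 1) * tS \<le> \<gamma> * t0"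
    using P pos unfolding exp_efficiency[OF P(1)] gamma_eq
    by (simp add: field_simps mult_left_mono)
  show "efficiency P \<le> efficiency Pmax" using efficiency_mono P by simp
  have "0 \<le> efficiency P" using P(1) pos unfolding efficiency_def by simp
  then show "0 < efficiency P"
    using demand demand_pos by (cases "efficiency P = 0") auto
qed

lemma source_feasible_tight:
  assumes "0 < v" "v \<le> efficiency Pmax"
  shows "source_feasible W N0 PA Pmax D zeta h g (demand * (exp v - 1) / (v * \<gamma>)) (demand / v)
    ((exp v - 1) * W * N0 / g)"
proof -
  have ev: "1 < exp v" using assms(1) by simp
  have "exp v \<le> 1 + Pmax * g / (W * N0)"
    using assms(2) exp_efficiency[of Pmax] pos by (metis exp_le_cancel_iff less_imp_le)
  then have "(exp v - 1) * W * N0 / g \<le> Pmax"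
    using pos by (simp add: field_simps)
  moreover have "log 2 (1 + (exp v - 1) * W * N0 / g * g / (W * N0)) = v / ln 2"
    using pos unfolding log_def by simp
  moreover have "(exp v - 1) * W * N0 / g * (demand / v)
      = zeta * PA * h * (demand * (exp v - 1) / (v * \<gamma>))"
    using pos assms(1) gamma_pos unfolding gamma_eq by (simp add: field_simps)
  ultimately show ?thesis
    using ev pos assms(1) demand_pos unfolding source_feasible_def demand_def by simp
qed

lemma tau0_hat_eq:
  "tau0_hat W N0 PA Pmax D zeta h g = demand * (exp opt_efficiency - 1) / (opt_efficiency * \<gamma>)"
proof -
  define \<alpha> where "\<alpha> = alpha_i \<gamma>"
  define um where "um = efficiency Pmax"
  have \<alpha>: "0 < \<alpha>" unfolding \<alpha>_def using alpha_i(1)[OF gamma_pos] .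
  have um: "0 < um" "exp um = 1 + Pmax * g / (W * N0)"
    unfolding um_def using efficiency_Pmax_pos exp_efficiency pos by auto
  have dot: "D * ln 2 / (W * \<alpha> * \<gamma>) * (2 powr (\<alpha> / ln 2) - 1) = demand * (exp \<alpha> - 1) / (\<alpha> * \<gamma>)"
    unfolding demand_def powr_def by simp
  have ddot: "Pmax * (D / (W * log 2 (1 + Pmax * g / (W * N0)))) / (zeta * PA * h)
      = demand * (exp um - 1) / (um * \<gamma>)"
    using pos um unfolding demand_def gamma_eq um_def efficiency_def log_def
    by (simp add: field_simps)
  have "zeta * PA * h * (demand * (exp \<alpha> - 1) / (\<alpha> * \<gamma>)) / (D * ln 2 / (W * \<alpha>))
      = (exp \<alpha> - 1) * W * N0 / g"
    using pos \<alpha> unfolding demand_def gamma_eq by (simp add: field_simps)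
  moreover have "(exp \<alpha> - 1) * W * N0 / g \<le> Pmax \<longleftrightarrow> exp \<alpha> \<le> 1 + Pmax * g / (W * N0)"
    using pos by (simp add: field_simps)
  ultimately have cond: "zeta * PA * h * (demand * (exp \<alpha> - 1) / (\<alpha> * \<gamma>)) / (D * ln 2 / (W * \<alpha>)) \<le> Pmax
      \<longleftrightarrow> \<alpha> \<le> um" unfolding um(2)[symmetric] by simp
  show ?thesis
    unfolding tau0_hat_def Let_def \<alpha>_def[symmetric] dot ddot cond opt_efficiency_def um_def[symmetric]
    by (simp add: min_def)
qed

lemma source_improvement:
  assumes "source_feasible W N0 PA Pmax D zeta h g t0 tS P"
    and "t0 < tau0_hat W N0 PA Pmax D zeta h g"
  shows "\<exists>tS' P'. source_feasible W N0 PA Pmax D zeta h g (tau0_hat W N0 PA Pmax D zeta h g) tS' P'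
    \<and> tau0_hat W N0 PA Pmax D zeta h g + tS' < t0 + tS"
proof -
  note u = source_feasible_efficiency[OF assms(1)]
  have "time_factor \<gamma> opt_efficiency < time_factor \<gamma> (efficiency P)"
    if "efficiency P \<noteq> opt_efficiency"
    using time_factor_capped_min[OF alpha_i[OF gamma_pos] u(3,4)] that
    unfolding opt_efficiency_def by simp
  then have "tau0_hat W N0 PA Pmax D zeta h g + demand / opt_efficiency < t0 + tS"
    using tight_schedule_strictly_better[OF demand_pos gamma_pos u(3) opt_efficiency_pos u(1,2)]
      assms(2)
    unfolding tau0_hat_eq by blast
  moreover have "source_feasible W N0 PA Pmax D zeta h g (tau0_hat W N0 PA Pmax D zeta h g)
      (demand / opt_efficiency) ((exp opt_efficiency - 1) * W * N0 / g)"
    using source_feasible_tight[OF opt_efficiency_pos] unfolding tau0_hat_eq opt_efficiency_def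
    by simp
  ultimately show ?thesis by blast
qed

end

theorem lemma4:
  fixes N :: nat and W N0 PA Pmax :: real
    and D zeta h g :: "nat \<Rightarrow> real"
    and tau0 :: real and tauS PS :: "nat \<Rightarrow> real"
  assumes "N \<ge> 1" and "W > 0" and "N0 > 0" and "PA > 0" and "Pmax > 0"
    and "\<forall>i\<in>{1..N}. D i > 0 \<and> zeta i > 0 \<and> h i > 0 \<and> g i > 0"
    and "wpn_optimal N W N0 PA Pmax D zeta h g tau0 tauS PS"
  shows "(MAX i\<in>{1..N}. tau0_hat W N0 PA Pmax (D i) (zeta i) (h i) (g i)) \<le> tau0"
proof (rule ccontr)
  let ?hat = "\<lambda>i. tau0_hat W N0 PA Pmax (D i) (zeta i) (h i) (g i)"
  assume "\<not> ?thesis"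
  then obtain i where i: "i \<in> {1..N}" "tau0 < ?hat i"
    using assms(1) by (auto simp: Max_gr_iff)
  interpret wpn_source W N0 PA Pmax "D i" "zeta i" "h i" "g i"
    using assms(2-6) i(1) by unfold_locales auto
  have feasible: "wpn_feasible N W N0 PA Pmax D zeta h g tau0 tauS PS"
    and optimal: "\<And>t0 tS P. wpn_feasible N W N0 PA Pmax D zeta h g t0 tS P \<Longrightarrow>
        wpn_objective N tau0 tauS \<le> wpn_objective N t0 tS"
    using assms(7) unfolding wpn_optimal_def by auto
  obtain tS' P' where
    better: "source_feasible W N0 PA Pmax (D i) (zeta i) (h i) (g i) (?hat i) tS' P'"
      "?hat i + tS' < tau0 + tauS i"
    using source_improvement feasible i unfolding wpn_feasible_iff by blast
  have "\<forall>j\<in>{1..N}. 0 \<le> zeta j * PA * h j"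
    using assms(4,6) by (auto intro!: mult_nonneg_nonneg)
  then have "wpn_feasible N W N0 PA Pmax D zeta h g (?hat i) (tauS(i := tS')) (PS(i := P'))"
    using wpn_feasible_fun_upd[OF feasible _ _ better(1)] i(2) by simp
  then have "wpn_objective N tau0 tauS \<le> wpn_objective N (?hat i) (tauS(i := tS'))"
    by (rule optimal)
  then show False
    using better(2) unfolding wpn_objective_def sum_fun_upd[OF finite_atLeastAtMost i(1)]
    by linarith
qed

end
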